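(* Let $f(u)=\sum_{j=0}^d a_ju^j$ be a real polynomial of degree $d\ge 2$ that is convex on $(0,\infty)$, strictly convex at $1$, and satisfies $f(1)=0$ and $f'(1)=0$. Then for any two probability densities $p,q$ (w.r.t. a common $\sigma$-finite measure $\mu$) for which the power chi pseudo-distances $\chi_i^\pm(p:q)$, $2\le i\le d$, are finite, the $f$-divergence has the finite chi expansion $$ I_f(p:q)=\sum_{i=2}^d\Big(\sum_{j=i}^d a_j\binom{j}{i}\Big)\chi_i^\pm(p:q). $$ Moreover, when $p=f(x;\theta_p)$ and $q=f(x;\theta_q)$ are members of the same affine exponential family with log-normalizer $F$, these quantities are finite and $I_f(p:q)$ is given in closed form by $$ I_f(p:q)=\sum_{i=2}^d\Big(\sum_{j=i}^d a_j\binom{j}{i}\Big)\sum_{s=0}^i(-1)^{i-s}\binom{i}{s}\exp\Big(F\big((1-s)\theta_p+s\theta_q\big)-\big((1-s)F(\theta_p)+sF(\theta_q)\big)\Big). $$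
   Context: For a convex $f:(0,\infty)\to\mathbb{R}$, the $f$-divergence between densities $p,q$ w.r.t. $\mu$ is $I_f(p:q)=\int p(x)f\big(\frac{q(x)}{p(x)}\big)\,d\mu(x)$ (with the usual conventions $0f(0/0)=0$ etc.). For integer $i\ge2$, the $i$-th power chi pseudo-distance is $\chi_i^\pm(p:q)=\int\frac{(q(x)-p(x))^i}{p(x)^{i-1}}\,d\mu(x)$. An exponential family consists of densities $f(x;\theta)=\exp(t(x)^\top\theta-F(\theta)+k(x))1_{\mathcal{X}}(x)$ with natural parameter space $\Theta=\{\theta:\int\exp(t(x)^\top\theta+k(x))d\mu<\infty\}$ and log-normalizer $F(\theta)=\log\int\exp(t(x)^\top\theta+k(x))d\mu$; it is an affine exponential family when $\Theta$ is affine (closed under affine combinations, e.g. $\Theta=\mathbb{R}^D$). *)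

theory Defs
  imports "HOL-Analysis.Analysis" "HOL-Probability.Probability"
begin

definition is_density :: "'a measure \<Rightarrow> ('a \<Rightarrow> real) \<Rightarrow> bool" where
  "is_density M p \<longleftrightarrow> p \<in> borel_measurable M \<and> (\<forall>x\<in>space M. 0 \<le> p x)
     \<and> (\<integral>\<^sup>+ x. ennreal (p x) \<partial>M) = 1"

definition chi_integrand :: "nat \<Rightarrow> ('a \<Rightarrow> real) \<Rightarrow> ('a \<Rightarrow> real) \<Rightarrow> 'a \<Rightarrow> real" where
  "chi_integrand i p q x = (if p x > 0 then (q x - p x) ^ i / p x ^ (i - 1) else 0)"

text \<open>Finiteness of chi_i(p:q): with the usual conventions the integrand is +infinity where
  p = 0 < q, so finiteness means q = 0 a.e. on {p = 0} and the integrand is integrable.\<close>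
definition chi_finite :: "'a measure \<Rightarrow> nat \<Rightarrow> ('a \<Rightarrow> real) \<Rightarrow> ('a \<Rightarrow> real) \<Rightarrow> bool" where
  "chi_finite M i p q \<longleftrightarrow> (AE x in M. p x = 0 \<longrightarrow> q x = 0) \<and> integrable M (chi_integrand i p q)"

definition chi_pm :: "'a measure \<Rightarrow> nat \<Rightarrow> ('a \<Rightarrow> real) \<Rightarrow> ('a \<Rightarrow> real) \<Rightarrow> real" where
  "chi_pm M i p q = (\<integral>x. chi_integrand i p q x \<partial>M)"

text \<open>Integrand of the f-divergence I_f(p:q) = \<integral> p f(q/p) dmu, with 0 f(0/0) = 0.
  (Points with p = 0 < q are excluded by hypothesis -- they form a null set.)\<close>
definition fdiv_integrand :: "(real \<Rightarrow> real) \<Rightarrow> ('a \<Rightarrow> real) \<Rightarrow> ('a \<Rightarrow> real) \<Rightarrow> 'a \<Rightarrow> real" where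
  "fdiv_integrand f p q x = (if p x > 0 then p x * f (q x / p x) else 0)"

definition fdiv :: "'a measure \<Rightarrow> (real \<Rightarrow> real) \<Rightarrow> ('a \<Rightarrow> real) \<Rightarrow> ('a \<Rightarrow> real) \<Rightarrow> real" where
  "fdiv M f p q = (\<integral>x. fdiv_integrand f p q x \<partial>M)"

text \<open>Exponential families: sufficient statistic t, carrier term k, support X.\<close>
definition natparam_space ::
  "'a measure \<Rightarrow> ('a \<Rightarrow> 'b::euclidean_space) \<Rightarrow> ('a \<Rightarrow> real) \<Rightarrow> 'a set \<Rightarrow> 'b set" where
  "natparam_space M t k X =
     {\<theta>. (\<integral>\<^sup>+ x. ennreal (exp (t x \<bullet> \<theta> + k x) * indicator X x) \<partial>M) < \<infinity>}"

definition lognorm ::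
  "'a measure \<Rightarrow> ('a \<Rightarrow> 'b::euclidean_space) \<Rightarrow> ('a \<Rightarrow> real) \<Rightarrow> 'a set \<Rightarrow> 'b \<Rightarrow> real" where
  "lognorm M t k X \<theta> =
     ln (enn2real (\<integral>\<^sup>+ x. ennreal (exp (t x \<bullet> \<theta> + k x) * indicator X x) \<partial>M))"

definition expfam_density ::
  "'a measure \<Rightarrow> ('a \<Rightarrow> 'b::euclidean_space) \<Rightarrow> ('a \<Rightarrow> real) \<Rightarrow> 'a set \<Rightarrow> 'b \<Rightarrow> 'a \<Rightarrow> real" where
  "expfam_density M t k X \<theta> x =
     exp (t x \<bullet> \<theta> - lognorm M t k X \<theta> + k x) * indicator X x"

end

theory Submission
  imports Defs
begin

text \<open>A polynomial equals its own Taylor expansion at 1: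
  \<open>f u = (\<Sum>i\<le>d. c\<^sub>i (u - 1)^i)\<close> with \<open>c\<^sub>i = (\<Sum>j=i..d. a\<^sub>j (j choose i))\<close>, and \<open>f 1 = 0\<close>, \<open>f' 1 = 0\<close> kill
  \<open>c\<^sub>0, c\<^sub>1\<close>. Hence \<open>p f(q/p) = (\<Sum>i=2..d. c\<^sub>i (q - p)^i / p^(i-1))\<close> pointwise, and integrating term by
  term gives the chi expansion. For two members of an exponential family, expanding \<open>(q - p)^i\<close>
  binomially writes \<open>(q - p)^i / p^(i-1)\<close> as a combination of \<open>p^(1-s) q^s\<close>, which is the
  unnormalised density at \<open>\<theta>\<^sub>s = (1 - s) \<theta>\<^sub>p + s \<theta>\<^sub>q\<close> times \<open>exp (-((1 - s) F \<theta>\<^sub>p + s F \<theta>\<^sub>q))\<close>.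
  Since the natural parameter space is affine, \<open>\<theta>\<^sub>s\<close> is again a natural parameter, so that
  density integrates to \<open>exp (F \<theta>\<^sub>s)\<close>.\<close>

definition coeff_at_1 :: "(nat \<Rightarrow> real) \<Rightarrow> nat \<Rightarrow> nat \<Rightarrow> real" where
  "coeff_at_1 a d i = (\<Sum>j=i..d. a j * real (j choose i))"

lemma poly_expand_at_1:
  "(\<Sum>j\<le>d. a j * u ^ j) = (\<Sum>i\<le>d. coeff_at_1 a d i * (u - 1) ^ i)"
proof -
  have power_expand: "u ^ j = (\<Sum>i\<le>d. real (j choose i) * (u - 1) ^ i)" if "j \<le> d" for j
  proof -
    have "u ^ j = (\<Sum>i\<le>j. real (j choose i) * (u - 1) ^ i)"
      using binomial_ring[of "u - 1" 1 j] by simp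
    also have "\<dots> = (\<Sum>i\<le>d. real (j choose i) * (u - 1) ^ i)"
      by (rule sum.mono_neutral_left) (use that in auto)
    finally show ?thesis .
  qed
  have "(\<Sum>j\<le>d. a j * u ^ j) = (\<Sum>j\<le>d. \<Sum>i\<le>d. a j * real (j choose i) * (u - 1) ^ i)"
    by (rule sum.cong) (auto simp: power_expand sum_distrib_left mult.assoc)
  also have "\<dots> = (\<Sum>i\<le>d. (\<Sum>j\<le>d. a j * real (j choose i)) * (u - 1) ^ i)"
    by (subst sum.swap) (simp add: sum_distrib_right)
  also have "\<dots> = (\<Sum>i\<le>d. coeff_at_1 a d i * (u - 1) ^ i)"
    unfolding coeff_at_1_def by (intro sum.cong refl arg_cong2[where f = "(*)"] sum.mono_neutral_right) auto
  finally show ?thesis .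
qed

lemma coeff_at_1_0: "coeff_at_1 a d 0 = (\<Sum>j\<le>d. a j * 1 ^ j)"
  unfolding coeff_at_1_def by (simp add: atLeast0AtMost)

lemma coeff_at_1_1: "coeff_at_1 a d 1 = deriv (\<lambda>u. \<Sum>j\<le>d. a j * u ^ j) 1"
proof -
  have "((\<lambda>u. \<Sum>j\<le>d. a j * u ^ j) has_real_derivative (\<Sum>j\<le>d. a j * real j)) (at 1)"
    by (intro DERIV_sum DERIV_cmult) (rule DERIV_pow[where x = 1, simplified])
  moreover have "coeff_at_1 a d 1 = (\<Sum>j\<le>d. a j * real j)"
    unfolding coeff_at_1_def by simp (rule sum.mono_neutral_left, auto)
  ultimately show ?thesis by (simp add: DERIV_imp_deriv)
qed

lemma fdiv_integrand_poly:
  assumes f_def: "f = (\<lambda>u. \<Sum>j\<le>d. a j * u ^ j)" and "f 1 = 0" and "deriv f 1 = 0"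
  shows "fdiv_integrand f p q x = (\<Sum>i=2..d. coeff_at_1 a d i * chi_integrand i p q x)"
proof (cases "p x > 0")
  case False
  then show ?thesis by (simp add: fdiv_integrand_def chi_integrand_def)
next
  case True
  have low_coeffs: "coeff_at_1 a d i = 0" if "i < 2" for i
    using that assms coeff_at_1_0[of a d] coeff_at_1_1[of a d] by (auto simp: less_2_cases_iff)
  have chi_term: "p x * (q x / p x - 1) ^ i = chi_integrand i p q x" if "i \<ge> 1" for i
  proof -
    from that obtain m where "i = Suc m" by (cases i) auto
    then show ?thesis
      using True by (simp add: chi_integrand_def power_divide field_simps)
  qed
  have "fdiv_integrand f p q x = (\<Sum>i\<le>d. coeff_at_1 a d i * (p x * (q x / p x - 1) ^ i))"
    using True unfolding fdiv_integrand_def f_def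
    by (subst poly_expand_at_1) (simp add: sum_distrib_left mult.left_commute)
  also have "\<dots> = (\<Sum>i=2..d. coeff_at_1 a d i * (p x * (q x / p x - 1) ^ i))"
    by (rule sum.mono_neutral_right) (auto simp: low_coeffs)
  also have "\<dots> = (\<Sum>i=2..d. coeff_at_1 a d i * chi_integrand i p q x)"
    by (rule sum.cong) (auto simp: chi_term)
  finally show ?thesis .
qed

lemma fdiv_poly_chi_expansion:
  assumes "f = (\<lambda>u. \<Sum>j\<le>d. a j * u ^ j)" and "f 1 = 0" and "deriv f 1 = 0"
    and chi_int: "\<And>i. i \<in> {2..d} \<Longrightarrow> integrable M (chi_integrand i p q)"
  shows "integrable M (fdiv_integrand f p q)"
    and "fdiv M f p q = (\<Sum>i=2..d. coeff_at_1 a d i * chi_pm M i p q)"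
proof -
  have expand: "fdiv_integrand f p q = (\<lambda>x. \<Sum>i=2..d. coeff_at_1 a d i * chi_integrand i p q x)"
    by (rule ext) (rule fdiv_integrand_poly[OF assms(1-3)])
  show "integrable M (fdiv_integrand f p q)"
    unfolding expand using chi_int by (intro Bochner_Integration.integrable_sum integrable_mult_right) auto
  show "fdiv M f p q = (\<Sum>i=2..d. coeff_at_1 a d i * chi_pm M i p q)"
    unfolding fdiv_def chi_pm_def expand using chi_int
    by (subst Bochner_Integration.integral_sum) auto
qed

lemma alternating_binomial_sum:
  assumes "i \<ge> 1"
  shows "(\<Sum>s=0..i. (-1) ^ (i - s) * real (i choose s)) = 0"
proof -
  have "(0 :: real) = (1 + (-1)) ^ i"
    using assms by simp
  also have "\<dots> = (\<Sum>s\<le>i. real (i choose s) * 1 ^ s * (-1) ^ (i - s))"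
    by (rule binomial_ring)
  finally show ?thesis
    by (simp add: atLeast0AtMost mult.commute)
qed

lemma binomial_exp_diff_power:
  fixes A B :: real
  assumes "i \<ge> 1"
  shows "(exp B - exp A) ^ i / exp A ^ (i - 1) =
    (\<Sum>s=0..i. (-1) ^ (i - s) * real (i choose s) * exp (real s * B + (1 - real s) * A))"
proof -
  have summand: "real (i choose s) * exp B ^ s * (- exp A) ^ (i - s) / exp A ^ (i - 1) =
      (-1) ^ (i - s) * real (i choose s) * exp (real s * B + (1 - real s) * A)" if "s \<in> {..i}" for s
  proof -
    have "real (i - s) * A - real (i - 1) * A = (1 - real s) * A"
      using that assms by (simp add: algebra_simps)
    then have "exp B ^ s * exp A ^ (i - s) / exp A ^ (i - 1) = exp (real s * B + (1 - real s) * A)"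
      by (simp add: exp_of_nat_mult[symmetric] exp_add[symmetric] exp_diff[symmetric])
    then show ?thesis
      by (simp add: power_minus[of "exp A"] field_simps)
  qed
  have "(exp B - exp A) ^ i / exp A ^ (i - 1) =
      (\<Sum>s\<le>i. real (i choose s) * exp B ^ s * (- exp A) ^ (i - s)) / exp A ^ (i - 1)"
    using binomial_ring[of "exp B" "- exp A" i] by simp
  also have "\<dots> = (\<Sum>s=0..i. (-1) ^ (i - s) * real (i choose s) * exp (real s * B + (1 - real s) * A))"
    unfolding sum_divide_distrib atLeast0AtMost by (rule sum.cong[OF refl summand])
  finally show ?thesis .
qed

definition expfam_weight ::
  "('a \<Rightarrow> 'b::euclidean_space) \<Rightarrow> ('a \<Rightarrow> real) \<Rightarrow> 'a set \<Rightarrow> 'b \<Rightarrow> 'a \<Rightarrow> real" where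
  "expfam_weight t k X \<theta> x = exp (t x \<bullet> \<theta> + k x) * indicator X x"

lemma borel_measurable_expfam_weight [measurable]:
  assumes [measurable]: "t \<in> borel_measurable M" "k \<in> borel_measurable M" "X \<in> sets M"
  shows "expfam_weight t k X \<theta> \<in> borel_measurable M"
  unfolding expfam_weight_def by measurable

lemma
  assumes [measurable]: "t \<in> borel_measurable M" "k \<in> borel_measurable M" "X \<in> sets M"
    and "\<theta> \<in> natparam_space M t k X"
  shows integrable_expfam_weight: "integrable M (expfam_weight t k X \<theta>)"
    and lognorm_eq_ln_integral: "lognorm M t k X \<theta> = ln (\<integral>x. expfam_weight t k X \<theta> x \<partial>M)"
proof -
  have nonneg: "expfam_weight t k X \<theta> x \<ge> 0" for x
    by (simp add: expfam_weight_def)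
  show int: "integrable M (expfam_weight t k X \<theta>)"
    using assms(4) by (intro integrableI_nonneg)
      (auto simp: natparam_space_def expfam_weight_def)
  have "(\<integral>\<^sup>+ x. ennreal (expfam_weight t k X \<theta> x) \<partial>M) = ennreal (\<integral>x. expfam_weight t k X \<theta> x \<partial>M)"
    by (rule nn_integral_eq_integral[OF int]) (simp add: nonneg)
  then show "lognorm M t k X \<theta> = ln (\<integral>x. expfam_weight t k X \<theta> x \<partial>M)"
    using nonneg by (simp add: lognorm_def expfam_weight_def)
qed

lemma lognorm_null_support:
  assumes "AE x in M. x \<notin> X"
  shows "lognorm M t k X \<theta> = 0"
proof -
  have "(\<integral>\<^sup>+ x. ennreal (exp (t x \<bullet> \<theta> + k x) * indicator X x) \<partial>M) = 0"
    using assms by (subst nn_integral_cong_AE[where v = "\<lambda>_. 0"]) auto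
  then show ?thesis by (simp add: lognorm_def)
qed

lemma exp_lognorm:
  assumes [measurable]: "t \<in> borel_measurable M" "k \<in> borel_measurable M" "X \<in> sets M"
    and "\<theta> \<in> natparam_space M t k X" and support: "\<not> (AE x in M. x \<notin> X)"
  shows "exp (lognorm M t k X \<theta>) = (\<integral>x. expfam_weight t k X \<theta> x \<partial>M)"
proof -
  let ?Z = "\<integral>x. expfam_weight t k X \<theta> x \<partial>M"
  have nonneg: "expfam_weight t k X \<theta> x \<ge> 0" for x
    by (simp add: expfam_weight_def)
  have "?Z \<noteq> 0"
  proof
    assume "?Z = 0"
    then have "(\<integral>\<^sup>+ x. ennreal (expfam_weight t k X \<theta> x) \<partial>M) = 0"
      using nn_integral_eq_integral[OF integrable_expfam_weight[OF assms(1-4)]] nonneg by simp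
    then have "AE x in M. ennreal (expfam_weight t k X \<theta> x) = 0"
      by (simp add: nn_integral_0_iff_AE)
    then have "AE x in M. x \<notin> X"
      by (rule AE_mp) (auto simp: expfam_weight_def)
    with support show False ..
  qed
  moreover have "?Z \<ge> 0"
    using nonneg by simp
  ultimately show ?thesis
    using lognorm_eq_ln_integral[OF assms(1-4)] by simp
qed

lemma chi_integrand_expfam:
  fixes M :: "'a measure" and t :: "'a \<Rightarrow> 'b::euclidean_space" and k X
  defines "F \<equiv> lognorm M t k X"
  assumes "i \<ge> 1"
  shows "chi_integrand i (expfam_density M t k X \<theta>p) (expfam_density M t k X \<theta>q) x =
    (\<Sum>s=0..i. (-1) ^ (i - s) * real (i choose s) * exp (- ((1 - real s) * F \<theta>p + real s * F \<theta>q))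
       * expfam_weight t k X ((1 - real s) *\<^sub>R \<theta>p + real s *\<^sub>R \<theta>q) x)"
proof (cases "x \<in> X")
  case False
  then show ?thesis
    by (simp add: chi_integrand_def expfam_density_def expfam_weight_def)
next
  case True
  let ?A = "t x \<bullet> \<theta>p - F \<theta>p + k x" and ?B = "t x \<bullet> \<theta>q - F \<theta>q + k x"
  have "chi_integrand i (expfam_density M t k X \<theta>p) (expfam_density M t k X \<theta>q) x =
      (exp ?B - exp ?A) ^ i / exp ?A ^ (i - 1)"
    using True by (simp add: chi_integrand_def expfam_density_def F_def)
  also have "\<dots> = (\<Sum>s=0..i. (-1) ^ (i - s) * real (i choose s) * exp (real s * ?B + (1 - real s) * ?A))"
    by (rule binomial_exp_diff_power[OF assms(2)])
  also have "\<dots> = (\<Sum>s=0..i. (-1) ^ (i - s) * real (i choose s) * exp (- ((1 - real s) * F \<theta>p + real s * F \<theta>q))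
       * expfam_weight t k X ((1 - real s) *\<^sub>R \<theta>p + real s *\<^sub>R \<theta>q) x)"
  proof (rule sum.cong)
    fix s
    have "real s * ?B + (1 - real s) * ?A =
        - ((1 - real s) * F \<theta>p + real s * F \<theta>q) + (t x \<bullet> ((1 - real s) *\<^sub>R \<theta>p + real s *\<^sub>R \<theta>q) + k x)"
      by (simp add: algebra_simps)
    then show "(-1) ^ (i - s) * real (i choose s) * exp (real s * ?B + (1 - real s) * ?A) =
        (-1) ^ (i - s) * real (i choose s) * exp (- ((1 - real s) * F \<theta>p + real s * F \<theta>q))
       * expfam_weight t k X ((1 - real s) *\<^sub>R \<theta>p + real s *\<^sub>R \<theta>q) x"
      using True by (simp add: expfam_weight_def exp_add)
  qed simp
  finally show ?thesis .
qed

lemma expfam_chi_closed_form: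
  fixes M :: "'a measure" and t :: "'a \<Rightarrow> 'b::euclidean_space" and k X \<theta>p \<theta>q
  defines "p \<equiv> expfam_density M t k X \<theta>p" and "q \<equiv> expfam_density M t k X \<theta>q"
    and "F \<equiv> lognorm M t k X"
  assumes [measurable]: "t \<in> borel_measurable M" "k \<in> borel_measurable M" "X \<in> sets M"
    and affine: "affine (natparam_space M t k X)"
    and \<theta>p: "\<theta>p \<in> natparam_space M t k X" and \<theta>q: "\<theta>q \<in> natparam_space M t k X"
    and "i \<ge> 1"
  shows "chi_finite M i p q"
    and "chi_pm M i p q =
      (\<Sum>s=0..i. (-1) ^ (i - s) * real (i choose s) *
         exp (F ((1 - real s) *\<^sub>R \<theta>p + real s *\<^sub>R \<theta>q) - ((1 - real s) * F \<theta>p + real s * F \<theta>q)))"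
proof -
  define \<theta> where "\<theta> s = (1 - real s) *\<^sub>R \<theta>p + real s *\<^sub>R \<theta>q" for s :: nat
  define c where "c s = (-1) ^ (i - s) * real (i choose s) *
    exp (- ((1 - real s) * F \<theta>p + real s * F \<theta>q))" for s :: nat
  have \<theta>_mem: "\<theta> s \<in> natparam_space M t k X" for s
    using affine \<theta>p \<theta>q unfolding \<theta>_def affine_def by auto
  have integrable_weight: "integrable M (expfam_weight t k X (\<theta> s))" for s
    by (rule integrable_expfam_weight[OF assms(4-6) \<theta>_mem])
  have chi_eq: "chi_integrand i p q = (\<lambda>x. \<Sum>s=0..i. c s * expfam_weight t k X (\<theta> s) x)"
    unfolding p_def q_def chi_integrand_expfam[OF \<open>i \<ge> 1\<close>]
    by (simp add: F_def c_def \<theta>_def mult.assoc)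
  have "AE x in M. p x = 0 \<longrightarrow> q x = 0"
    by (simp add: p_def q_def expfam_density_def)
  then show "chi_finite M i p q"
    unfolding chi_finite_def chi_eq using integrable_weight by auto
  have chi_pm_eq: "chi_pm M i p q = (\<Sum>s=0..i. c s * (\<integral>x. expfam_weight t k X (\<theta> s) x \<partial>M))"
    unfolding chi_pm_def chi_eq using integrable_weight
    by (subst Bochner_Integration.integral_sum) auto
  show "chi_pm M i p q =
      (\<Sum>s=0..i. (-1) ^ (i - s) * real (i choose s) *
         exp (F ((1 - real s) *\<^sub>R \<theta>p + real s *\<^sub>R \<theta>q) - ((1 - real s) * F \<theta>p + real s * F \<theta>q)))"
  proof (cases "AE x in M. x \<notin> X")
    case True
    \<comment> \<open>degenerate family: all weights vanish a.e. and \<open>F = ln 0 = 0\<close>; the closed form is then an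
      alternating binomial sum\<close>
    have "(\<integral>x. expfam_weight t k X \<theta>' x \<partial>M) = 0" for \<theta>'
      using True by (intro integral_eq_zero_AE) (auto simp: expfam_weight_def)
    moreover have "F \<theta>' = 0" for \<theta>'
      unfolding F_def using True by (rule lognorm_null_support)
    ultimately show ?thesis
      using chi_pm_eq alternating_binomial_sum[OF \<open>i \<ge> 1\<close>] by simp
  next
    case False
    have "(\<integral>x. expfam_weight t k X (\<theta> s) x \<partial>M) = exp (F (\<theta> s))" for s
      unfolding F_def using exp_lognorm[OF assms(4-6) \<theta>_mem False] ..
    then show ?thesis
      unfolding chi_pm_eq by (intro sum.cong refl) (simp add: c_def \<theta>_def exp_add[symmetric])
  qed
qed

theorem theorem2:
  fixes M :: "'a measure" and a :: "nat \<Rightarrow> real" and d :: nat and f :: "real \<Rightarrow> real"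
  assumes sf: "sigma_finite_measure M"
    and f_def: "f = (\<lambda>u. \<Sum>j\<le>d. a j * u ^ j)"
    and deg: "d \<ge> 2" "a d \<noteq> 0"
    and conv: "convex_on {0<..} f"
    and strict1: "deriv (deriv f) 1 > 0"
    and f1: "f 1 = 0"
    and df1: "deriv f 1 = 0"
  shows
    "(\<forall>p q. is_density M p \<and> is_density M q \<and> (\<forall>i\<in>{2..d}. chi_finite M i p q) \<longrightarrow>
        integrable M (fdiv_integrand f p q) \<and>
        fdiv M f p q = (\<Sum>i=2..d. (\<Sum>j=i..d. a j * real (j choose i)) * chi_pm M i p q))
   \<and> (\<forall>(t :: 'a \<Rightarrow> 'b::euclidean_space) k X \<theta>p \<theta>q.
        t \<in> borel_measurable M \<and> k \<in> borel_measurable M \<and> X \<in> sets M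
        \<and> affine (natparam_space M t k X)
        \<and> \<theta>p \<in> natparam_space M t k X \<and> \<theta>q \<in> natparam_space M t k X \<longrightarrow>
        (let p = expfam_density M t k X \<theta>p; q = expfam_density M t k X \<theta>q;
             F = lognorm M t k X in
          (\<forall>i\<in>{2..d}. chi_finite M i p q) \<and>
          integrable M (fdiv_integrand f p q) \<and>
          fdiv M f p q =
            (\<Sum>i=2..d. (\<Sum>j=i..d. a j * real (j choose i)) *
               (\<Sum>s=0..i. (-1) ^ (i - s) * real (i choose s) *
                  exp (F ((1 - real s) *\<^sub>R \<theta>p + real s *\<^sub>R \<theta>q)
                       - ((1 - real s) * F \<theta>p + real s * F \<theta>q))))))"
proof ((rule conjI; intro allI impI), goal_cases)
  case (1 p q)
  then have "\<And>i. i \<in> {2..d} \<Longrightarrow> integrable M (chi_integrand i p q)"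
    by (simp add: chi_finite_def)
  from fdiv_poly_chi_expansion[OF f_def f1 df1 this] show ?case
    by (simp add: coeff_at_1_def)
next
  case (2 t k X \<theta>p \<theta>q)
  define p q where "p = expfam_density M t k X \<theta>p" and "q = expfam_density M t k X \<theta>q"
  note closed_form = expfam_chi_closed_form[of t M k X \<theta>p \<theta>q, folded p_def q_def]
  have chi_finite: "\<forall>i\<in>{2..d}. chi_finite M i p q"
    using 2 closed_form(1) by auto
  then have "\<And>i. i \<in> {2..d} \<Longrightarrow> integrable M (chi_integrand i p q)"
    by (simp add: chi_finite_def)
  note expansion = fdiv_poly_chi_expansion[OF f_def f1 df1 this]
  show ?case
    unfolding Let_def p_def[symmetric] q_def[symmetric]
    using chi_finite expansion 2 closed_form(2) by (auto simp: coeff_at_1_def intro!: sum.cong)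
qed

end
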